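(* Let $\gamma>0$, let $\beta_1=\beta_1(\gamma)$ be the unique positive solution of $\frac{\sqrt\pi}{2}\gamma x(1+x)^{1/2}(3+x)=1$, let $0\le\beta<\beta_1$ and let $\mathrm{Ste}_\infty>0$. For each $\lambda>0$ let $\varphi_\lambda$ be the unique solution, within the set of bounded analytic functions $h:[0,\lambda]\to\mathbb{R}$ with $0\le h\le 1$, of \begin{align*} &[(1+\beta y(\eta))y'(\eta)]'+2\eta y'(\eta)=0, \quad 0<\eta<\lambda,\\ &y'(0)+\beta y(0)y'(0)-\gamma y(0)=0,\\ &y(\lambda)=1. \end{align*} Then the equation $$\frac{\varphi_\lambda'(\lambda)}{\lambda}=\frac{2}{(1+\beta)\,\mathrm{Ste}_\infty}$$ has at least one solution $\lambda>0$.
   Context: In the physical problem, $\mathrm{Ste}_\infty=c(T_f-T_\infty)/l$ is the Stefan number and $\gamma=2h_0\sqrt{\alpha_0}/k_0$. *)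

theory Defs
  imports "HOL-Analysis.Analysis"
begin

definition beta1 :: "real \<Rightarrow> real" where
  "beta1 \<gamma> = (THE x. x > 0 \<and> sqrt pi / 2 * \<gamma> * x * sqrt (1 + x) * (3 + x) = 1)"

definition real_analytic_on :: "(real \<Rightarrow> real) \<Rightarrow> real set \<Rightarrow> bool" where
  "real_analytic_on f S \<longleftrightarrow>
     (\<forall>x\<in>S. \<exists>r>0. \<exists>a::nat \<Rightarrow> real.
        \<forall>y\<in>S. \<bar>y - x\<bar> < r \<longrightarrow> (\<lambda>n. a n * (y - x) ^ n) sums f y)"

definition solves_problem :: "real \<Rightarrow> real \<Rightarrow> real \<Rightarrow> (real \<Rightarrow> real) \<Rightarrow> bool" where
  "solves_problem \<beta> \<gamma> lam h \<longleftrightarrow>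
     real_analytic_on h {0..lam} \<and>
     (\<forall>\<eta>\<in>{0..lam}. 0 \<le> h \<eta> \<and> h \<eta> \<le> 1) \<and>
     (\<exists>h'. (\<forall>\<eta>\<in>{0..lam}. (h has_real_derivative h' \<eta>) (at \<eta> within {0..lam})) \<and>
           (\<forall>\<eta>\<in>{0<..<lam}.
              ((\<lambda>t. (1 + \<beta> * h t) * h' t) has_real_derivative (- 2 * \<eta> * h' \<eta>)) (at \<eta>)) \<and>
           h' 0 + \<beta> * h 0 * h' 0 - \<gamma> * h 0 = 0) \<and>
     h lam = 1"

end

theory Submission
  imports Defs
begin

text \<open>With the integrating factor exp P, where P(\<eta>) is the integral of 2s/(1 + \<beta> h(s)) over
  [0, \<eta>], every solution h satisfies the first-order integral form
  h' = \<gamma> h(0) exp(-P) / (1 + \<beta> h). This system obeys a comparison principle: the solution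
  with the larger initial value has the faster-growing Kirchhoff transform h + \<beta> h^2 / 2,
  and solutions with equal initial values coincide by a Gronwall estimate. Comparing the solution
  on [0, \<lambda>] with the restriction of the one on [0, \<mu>], \<lambda> \<le> \<mu>, shows that the initial value and
  the exponent at the free boundary are locally Lipschitz in \<lambda>, hence so is the slope at the
  free boundary divided by \<lambda>. That quotient is at most \<gamma> / ((1 + \<beta>) \<lambda>) and, for \<lambda> \<le> 1, at
  least a positive constant over \<lambda>, so the intermediate value theorem yields the root.\<close>

lemma DERIV_le_imp_diff_le:
  fixes f f' :: "real \<Rightarrow> real"
  assumes "a \<le> b" "continuous_on {a..b} f"
    and "\<And>x. a < x \<Longrightarrow> x < b \<Longrightarrow> (f has_real_derivative f' x) (at x)"
    and "\<And>x. a < x \<Longrightarrow> x < b \<Longrightarrow> f' x \<le> M"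
  shows "f b - f a \<le> M * (b - a)"
proof -
  have "(\<lambda>x. f x - M * x) b \<le> (\<lambda>x. f x - M * x) a"
  proof (rule DERIV_nonpos_imp_decreasing_open[OF assms(1)])
    fix x assume "a < x" "x < b"
    then show "\<exists>y. ((\<lambda>x. f x - M * x) has_real_derivative y) (at x) \<and> y \<le> 0"
      using assms(3,4) by (intro exI[of _ "f' x - M"]) (auto intro!: derivative_eq_intros)
  qed (use assms(2) in \<open>intro continuous_intros\<close>)
  then show ?thesis by (simp add: algebra_simps)
qed

lemma has_real_derivative_eq_continuous_extension:
  fixes f f' k :: "real \<Rightarrow> real"
  assumes ab: "a < b"
    and df: "\<And>x. x \<in> {a..b} \<Longrightarrow> (f has_real_derivative f' x) (at x within {a..b})"
    and fk: "\<And>x. a < x \<Longrightarrow> x < b \<Longrightarrow> f' x = k x"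
    and ck: "continuous_on {a..b} k"
    and x: "x \<in> {a..b}"
  shows "f' x = k x"
proof -
  define F where "F y = f a + integral {a..y} k" for y
  have dF: "(F has_real_derivative k y) (at y within {a..b})" if "y \<in> {a..b}" for y
    unfolding F_def using integral_has_real_derivative[OF ck that]
    by (auto intro!: derivative_eq_intros)
  have f_eq_F: "f y = F y" if y: "y \<in> {a..b}" for y
  proof (cases "y = a")
    case False
    then have "a < y" using y by auto
    then have "(\<lambda>t. f t - F t) y = (\<lambda>t. f t - F t) a"
    proof (rule DERIV_isconst_end)
      show "continuous_on {a..y} (\<lambda>t. f t - F t)"
        using DERIV_continuous_on[OF df] DERIV_continuous_on[OF dF] y
        by (auto intro!: continuous_intros elim: continuous_on_subset)
      fix t assume "a < t" "t < y"
      then show "((\<lambda>t. f t - F t) has_real_derivative 0) (at t)"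
        using df[of t] dF[of t] fk[of t] y
        by (auto simp: at_within_Icc_at intro!: derivative_eq_intros)
    qed
    then show ?thesis by (simp add: F_def)
  qed (simp add: F_def)
  have "(f has_real_derivative k x) (at x within {a..b})"
    by (rule has_field_derivative_transform_within[OF dF[OF x], of 1]) (use x f_eq_F in auto)
  then show ?thesis
    using df[OF x] vector_derivative_unique_within_closed_interval[of a b x f "f' x" "k x"] ab x
    by (auto simp: has_real_derivative_iff_has_vector_derivative)
qed

lemma continuous_on_if_ordered_lipschitz:
  fixes f :: "real \<Rightarrow> real"
  assumes "\<And>x y. x \<in> S \<Longrightarrow> y \<in> S \<Longrightarrow> x \<le> y \<Longrightarrow> \<bar>f x - f y\<bar> \<le> K * (y - x)" "0 \<le> K"
  shows "continuous_on S f"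
proof (rule lipschitz_on_continuous_on)
  show "K-lipschitz_on S f"
  proof (rule lipschitz_onI)
    fix x y assume "x \<in> S" "y \<in> S"
    then show "dist (f x) (f y) \<le> K * dist x y"
      using assms(1)[of x y] assms(1)[of y x]
      by (cases "x \<le> y") (auto simp: dist_real_def abs_minus_commute)
  qed (rule assms(2))
qed

section \<open>The integral form\<close>

definition integrating_exponent :: "real \<Rightarrow> (real \<Rightarrow> real) \<Rightarrow> real \<Rightarrow> real" where
  "integrating_exponent \<beta> h \<eta> = integral {0..\<eta>} (\<lambda>s. 2 * s / (1 + \<beta> * h s))"

definition solves_integral_form :: "real \<Rightarrow> real \<Rightarrow> real \<Rightarrow> (real \<Rightarrow> real) \<Rightarrow> bool" where
  "solves_integral_form \<beta> \<gamma> L h \<longleftrightarrow> (\<forall>\<eta>\<in>{0..L}. 0 \<le> h \<eta> \<and> h \<eta> \<le> 1) \<and>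
     (\<forall>\<eta>\<in>{0..L}. (h has_real_derivative
        \<gamma> * h 0 * exp (- integrating_exponent \<beta> h \<eta>) / (1 + \<beta> * h \<eta>)) (at \<eta> within {0..L}))"

lemma integrating_exponent_0 [simp]: "integrating_exponent \<beta> h 0 = 0"
  by (simp add: integrating_exponent_def)

lemma continuous_on_exponent_integrand:
  fixes h :: "real \<Rightarrow> real"
  assumes "continuous_on S h" "0 \<le> \<beta>" "\<And>s. s \<in> S \<Longrightarrow> 0 \<le> h s"
  shows "continuous_on S (\<lambda>s. 2 * s / (1 + \<beta> * h s))"
  using assms by (intro continuous_intros) (auto simp: add_nonneg_eq_0_iff)

lemma has_real_derivative_integrating_exponent:
  assumes "continuous_on {0..L} h" "0 \<le> \<beta>" "\<And>s. s \<in> {0..L} \<Longrightarrow> 0 \<le> h s" "t \<in> {0..L}"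
  shows "(integrating_exponent \<beta> h has_real_derivative 2 * t / (1 + \<beta> * h t)) (at t within {0..L})"
  unfolding integrating_exponent_def
  using integral_has_real_derivative[OF continuous_on_exponent_integrand[OF assms(1-3)] assms(4)]
  by simp

lemma integrating_factor_constant:
  fixes c u P :: "real \<Rightarrow> real"
  assumes ode: "\<And>t. t \<in> {a<..<b} \<Longrightarrow> ((\<lambda>s. c s * u s) has_real_derivative - 2 * t * u t) (at t)"
    and dP: "\<And>t. t \<in> {a<..<b} \<Longrightarrow> (P has_real_derivative 2 * t / c t) (at t)"
    and c: "\<And>t. t \<in> {a<..<b} \<Longrightarrow> c t \<noteq> 0"
  obtains K where "\<And>t. t \<in> {a<..<b} \<Longrightarrow> c t * u t * exp (P t) = K"
proof -
  have "\<exists>K. \<forall>t\<in>{a<..<b}. c t * u t * exp (P t) = K"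
  proof (rule has_field_derivative_zero_constant)
    fix t assume t: "t \<in> {a<..<b}"
    have "- 2 * t * u t * exp (P t) + exp (P t) * (2 * t / c t) * (c t * u t) = 0"
      using c[OF t] by (simp add: field_simps)
    then show "((\<lambda>t. c t * u t * exp (P t)) has_real_derivative 0) (at t within {a<..<b})"
      using DERIV_mult[OF ode[OF t] DERIV_chain2[OF DERIV_exp dP[OF t]]]
      by (simp add: at_within_open[OF t])
  qed simp
  then show ?thesis using that by blast
qed

lemma solution_imp_integral_form:
  assumes \<beta>: "0 \<le> \<beta>" and L: "0 < L" and sol: "solves_problem \<beta> \<gamma> L h"
  shows "solves_integral_form \<beta> \<gamma> L h"
proof -
  obtain h' where bnd: "\<forall>\<eta>\<in>{0..L}. 0 \<le> h \<eta> \<and> h \<eta> \<le> 1"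
    and dh: "\<And>\<eta>. \<eta> \<in> {0..L} \<Longrightarrow> (h has_real_derivative h' \<eta>) (at \<eta> within {0..L})"
    and ode: "\<And>\<eta>. \<eta> \<in> {0<..<L} \<Longrightarrow>
      ((\<lambda>t. (1 + \<beta> * h t) * h' t) has_real_derivative - 2 * \<eta> * h' \<eta>) (at \<eta>)"
    and robin: "h' 0 + \<beta> * h 0 * h' 0 - \<gamma> * h 0 = 0"
    using sol unfolding solves_problem_def by blast
  have ch: "continuous_on {0..L} h" by (rule DERIV_continuous_on[OF dh])
  have pos: "0 < 1 + \<beta> * h t" if "t \<in> {0..L}" for t
    using bnd that \<beta> by (simp add: add_pos_nonneg)
  define P where "P = integrating_exponent \<beta> h"
  have dP: "(P has_real_derivative 2 * t / (1 + \<beta> * h t)) (at t within {0..L})"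
    if "t \<in> {0..L}" for t
    unfolding P_def by (rule has_real_derivative_integrating_exponent[OF ch \<beta> _ that]) (use bnd in auto)
  have dP_open: "(P has_real_derivative 2 * t / (1 + \<beta> * h t)) (at t)" if "t \<in> {0<..<L}" for t
    using dP[of t] that by (simp add: at_within_Icc_at)
  obtain K where K: "\<And>t. t \<in> {0<..<L} \<Longrightarrow> (1 + \<beta> * h t) * h' t * exp (P t) = K"
    by (rule integrating_factor_constant[OF ode dP_open]) (use pos in \<open>auto simp: less_imp_neq[symmetric]\<close>)
  define k where "k t = K * exp (- P t) / (1 + \<beta> * h t)" for t
  have ck: "continuous_on {0..L} k"
    unfolding k_def using DERIV_continuous_on[OF dP] ch pos
    by (intro continuous_intros) (auto simp: less_imp_neq[symmetric])
  have hk: "h' t = k t" if "t \<in> {0..L}" for t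
  proof (rule has_real_derivative_eq_continuous_extension[OF L dh _ ck that])
    fix t assume "0 < t" "t < L"
    then have "K * exp (- P t) = (1 + \<beta> * h t) * h' t"
      using K[of t] by (auto simp: mult.assoc exp_minus_inverse)
    then show "h' t = k t"
      using pos[of t] \<open>0 < t\<close> \<open>t < L\<close> by (simp add: k_def field_simps)
  qed
  have "h' 0 = K / (1 + \<beta> * h 0)"
    using hk[of 0] L by (simp add: k_def P_def)
  then have "K = (1 + \<beta> * h 0) * h' 0"
    using pos[of 0] L by (simp add: field_simps)
  with robin have "K = \<gamma> * h 0"
    by (simp add: algebra_simps)
  then show ?thesis
    using bnd dh hk unfolding solves_integral_form_def k_def P_def by auto
qed

lemma solves_integral_form_bounded:
  assumes "solves_integral_form \<beta> \<gamma> L h" "\<eta> \<in> {0..L}"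
  shows "0 \<le> h \<eta> \<and> h \<eta> \<le> 1"
  using assms unfolding solves_integral_form_def by blast

lemma solves_integral_form_deriv:
  assumes "solves_integral_form \<beta> \<gamma> L h" "\<eta> \<in> {0..L}"
  shows "(h has_real_derivative \<gamma> * h 0 * exp (- integrating_exponent \<beta> h \<eta>) / (1 + \<beta> * h \<eta>))
    (at \<eta> within {0..L})"
  using assms unfolding solves_integral_form_def by blast

lemma solves_integral_form_continuous:
  "solves_integral_form \<beta> \<gamma> L h \<Longrightarrow> continuous_on {0..L} h"
  by (rule DERIV_continuous_on[OF solves_integral_form_deriv])

lemma solves_integral_form_restrict:
  assumes "solves_integral_form \<beta> \<gamma> L h" "L' \<le> L"
  shows "solves_integral_form \<beta> \<gamma> L' h"
  unfolding solves_integral_form_def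
proof (intro conjI ballI)
  fix \<eta> assume "\<eta> \<in> {0..L'}"
  then have \<eta>: "\<eta> \<in> {0..L}" using assms(2) by auto
  show "0 \<le> h \<eta>" "h \<eta> \<le> 1" using solves_integral_form_bounded[OF assms(1) \<eta>] by auto
  show "(h has_real_derivative \<gamma> * h 0 * exp (- integrating_exponent \<beta> h \<eta>) / (1 + \<beta> * h \<eta>))
    (at \<eta> within {0..L'})"
    by (rule has_field_derivative_subset[OF solves_integral_form_deriv[OF assms(1) \<eta>]])
      (use assms(2) in auto)
qed

lemma exponent_integrand_bounds:
  fixes \<beta> s u :: real
  assumes "0 \<le> \<beta>" "0 \<le> s" "0 \<le> u"
  shows "0 \<le> 2 * s / (1 + \<beta> * u) \<and> 2 * s / (1 + \<beta> * u) \<le> 2 * s"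
proof -
  have d: "1 \<le> 1 + \<beta> * u" using assms by simp
  then have "2 * s \<le> 2 * s * (1 + \<beta> * u)" and "0 < 1 + \<beta> * u"
    using assms by (auto simp: mult_le_cancel_left1 add_pos_nonneg)
  then show ?thesis using assms by (simp add: divide_le_eq)
qed

lemma integrating_exponent_bounds:
  fixes h :: "real \<Rightarrow> real"
  assumes ch: "continuous_on {0..x} h" and \<beta>: "0 \<le> \<beta>"
    and h: "\<And>s. s \<in> {0..x} \<Longrightarrow> 0 \<le> h s" and x: "0 \<le> x"
  shows "0 \<le> integrating_exponent \<beta> h x \<and> integrating_exponent \<beta> h x \<le> 2 * x * x"
proof -
  have c: "continuous_on {0..x} (\<lambda>s. 2 * s / (1 + \<beta> * h s))"
    by (rule continuous_on_exponent_integrand[OF ch \<beta> h])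
  have bnd: "0 \<le> 2 * s / (1 + \<beta> * h s) \<and> 2 * s / (1 + \<beta> * h s) \<le> 2 * x" if "s \<in> {0..x}" for s
    using exponent_integrand_bounds[OF \<beta>, of s "h s"] h[OF that] that by auto
  have "0 \<le> integrating_exponent \<beta> h x"
    unfolding integrating_exponent_def
    using bnd by (intro integral_nonneg integrable_continuous_interval[OF c]) auto
  moreover have "norm (integrating_exponent \<beta> h x) \<le> 2 * x * (x - 0)"
    unfolding integrating_exponent_def
  proof (rule integral_bound)
    fix s assume "s \<in> {0..x}"
    with bnd have "0 \<le> 2 * s / (1 + \<beta> * h s) \<and> 2 * s / (1 + \<beta> * h s) \<le> 2 * x" .
    then show "norm (2 * s / (1 + \<beta> * h s)) \<le> 2 * x" by (metis abs_of_nonneg real_norm_def)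
  qed (use x c in auto)
  ultimately show ?thesis by simp
qed

lemma integral_form_exponent_bounds:
  assumes sol: "solves_integral_form \<beta> \<gamma> L h" and \<beta>: "0 \<le> \<beta>" and x: "x \<in> {0..L}"
  shows "0 \<le> integrating_exponent \<beta> h x \<and> integrating_exponent \<beta> h x \<le> 2 * x * x"
proof (rule integrating_exponent_bounds[OF _ \<beta>])
  show "continuous_on {0..x} h"
    by (rule continuous_on_subset[OF solves_integral_form_continuous[OF sol]]) (use x in auto)
qed (use solves_integral_form_bounded[OF sol] x in auto)

lemma integral_form_slope_bounds:
  assumes sol: "solves_integral_form \<beta> \<gamma> L h" and \<beta>: "0 \<le> \<beta>" and \<gamma>: "0 < \<gamma>"
    and x: "x \<in> {0..L}"
  shows "0 \<le> \<gamma> * h 0 * exp (- integrating_exponent \<beta> h x) / (1 + \<beta> * h x)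
    \<and> \<gamma> * h 0 * exp (- integrating_exponent \<beta> h x) / (1 + \<beta> * h x) \<le> \<gamma> * h 0"
proof -
  have h0: "0 \<le> h 0" and hx: "0 \<le> h x"
    using solves_integral_form_bounded[OF sol] x by auto
  have "0 \<le> integrating_exponent \<beta> h x"
    using integral_form_exponent_bounds[OF sol \<beta> x] by simp
  then have e: "exp (- integrating_exponent \<beta> h x) \<le> 1" by simp
  define a where "a = \<gamma> * h 0 * exp (- integrating_exponent \<beta> h x)"
  have a: "0 \<le> a" "a \<le> \<gamma> * h 0"
    unfolding a_def using e h0 \<gamma> by (auto simp: mult_left_le)
  have d: "1 \<le> 1 + \<beta> * h x" using \<beta> hx by simp
  then have "a \<le> a * (1 + \<beta> * h x)" using a by (simp add: mult_le_cancel_left1)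
  then have "a / (1 + \<beta> * h x) \<le> a" using d by (simp add: divide_le_eq)
  then show ?thesis using a d unfolding a_def[symmetric] by simp
qed

lemma integral_form_increasing:
  assumes sol: "solves_integral_form \<beta> \<gamma> L h" and \<beta>: "0 \<le> \<beta>" and \<gamma>: "0 < \<gamma>"
    and xy: "0 \<le> x" "x \<le> y" "y \<le> L"
  shows "h x \<le> h y \<and> h y - h x \<le> \<gamma> * h 0 * (y - x)"
proof -
  have c: "continuous_on {x..y} h"
    using solves_integral_form_continuous[OF sol] xy by (auto elim: continuous_on_subset)
  have d: "(h has_real_derivative \<gamma> * h 0 * exp (- integrating_exponent \<beta> h t) / (1 + \<beta> * h t))
    (at t)" if "x < t" "t < y" for t
    using solves_integral_form_deriv[OF sol, of t] that xy by (simp add: at_within_Icc_at)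
  have slope: "0 \<le> \<gamma> * h 0 * exp (- integrating_exponent \<beta> h t) / (1 + \<beta> * h t)
    \<and> \<gamma> * h 0 * exp (- integrating_exponent \<beta> h t) / (1 + \<beta> * h t) \<le> \<gamma> * h 0"
    if "x < t" "t < y" for t
    using integral_form_slope_bounds[OF sol \<beta> \<gamma>, of t] that xy by auto
  have "h x \<le> h y"
    by (rule DERIV_nonneg_imp_increasing_open[OF xy(2) _ c]) (use d slope in blast)
  moreover have "h y - h x \<le> \<gamma> * h 0 * (y - x)"
    by (rule DERIV_le_imp_diff_le[OF xy(2) c d]) (use slope in auto)
  ultimately show ?thesis ..
qed

section \<open>Comparison of solutions\<close>

definition kirchhoff :: "real \<Rightarrow> real \<Rightarrow> real" where
  "kirchhoff \<beta> v = v + \<beta> / 2 * v\<^sup>2"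

lemma kirchhoff_diff: "kirchhoff \<beta> v - kirchhoff \<beta> u = (v - u) * (1 + \<beta> * (u + v) / 2)"
  unfolding kirchhoff_def by (simp add: field_simps power2_eq_square)

lemma kirchhoff_diff_abs_ge:
  assumes "0 \<le> \<beta>" "0 \<le> u" "0 \<le> v"
  shows "\<bar>v - u\<bar> \<le> \<bar>kirchhoff \<beta> v - kirchhoff \<beta> u\<bar>"
proof -
  have "1 \<le> 1 + \<beta> * (u + v) / 2" using assms by simp
  then show ?thesis
    unfolding kirchhoff_diff abs_mult using mult_left_mono[of 1 _ "\<bar>v - u\<bar>"] by simp
qed

lemma kirchhoff_diff_ge:
  assumes "0 \<le> \<beta>" "0 \<le> u" "u \<le> v"
  shows "v - u \<le> kirchhoff \<beta> v - kirchhoff \<beta> u"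
proof -
  have "1 \<le> 1 + \<beta> * (u + v) / 2" using assms by simp
  then show ?thesis
    unfolding kirchhoff_diff using mult_left_mono[of 1 _ "v - u"] assms(3) by simp
qed

lemma kirchhoff_diff_le:
  assumes "0 \<le> \<beta>" "u \<le> v" "u \<le> 1" "v \<le> 1"
  shows "kirchhoff \<beta> v - kirchhoff \<beta> u \<le> (1 + \<beta>) * (v - u)"
proof -
  have "\<beta> * (u + v) \<le> \<beta> * 2" using assms by (intro mult_left_mono) auto
  then have "1 + \<beta> * (u + v) / 2 \<le> 1 + \<beta>" by simp
  then have "(v - u) * (1 + \<beta> * (u + v) / 2) \<le> (v - u) * (1 + \<beta>)"
    by (rule mult_left_mono) (use assms in simp)
  then show ?thesis by (simp add: kirchhoff_diff mult.commute)
qed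

lemma has_real_derivative_kirchhoff_integral_form:
  assumes sol: "solves_integral_form \<beta> \<gamma> L h" and \<beta>: "0 \<le> \<beta>" and x: "x \<in> {0..L}"
  shows "((\<lambda>t. kirchhoff \<beta> (h t)) has_real_derivative
    \<gamma> * h 0 * exp (- integrating_exponent \<beta> h x)) (at x within {0..L})"
proof -
  define d where "d = \<gamma> * h 0 * exp (- integrating_exponent \<beta> h x) / (1 + \<beta> * h x)"
  have "0 \<le> \<beta> * h x" using solves_integral_form_bounded[OF sol x] \<beta> by simp
  then have "d * (1 + \<beta> * h x) = \<gamma> * h 0 * exp (- integrating_exponent \<beta> h x)"
    unfolding d_def by simp
  then show ?thesis
    using solves_integral_form_deriv[OF sol x, folded d_def] unfolding kirchhoff_def
    by (auto intro!: derivative_eq_intros simp: algebra_simps)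
qed

lemma integrating_exponent_antimono:
  fixes g h :: "real \<Rightarrow> real"
  assumes "continuous_on {0..x} g" "continuous_on {0..x} h" "0 \<le> \<beta>"
    and "\<And>s. s \<in> {0..x} \<Longrightarrow> 0 \<le> g s" "\<And>s. s \<in> {0..x} \<Longrightarrow> g s \<le> h s"
  shows "integrating_exponent \<beta> h x \<le> integrating_exponent \<beta> g x"
  unfolding integrating_exponent_def
proof (rule integral_le)
  have "\<And>s. s \<in> {0..x} \<Longrightarrow> 0 \<le> h s" using assms(4,5) by (metis order_trans)
  then show "(\<lambda>s. 2 * s / (1 + \<beta> * h s)) integrable_on {0..x}"
    by (intro integrable_continuous_interval continuous_on_exponent_integrand assms(2,3))
  show "(\<lambda>s. 2 * s / (1 + \<beta> * g s)) integrable_on {0..x}"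
    by (intro integrable_continuous_interval continuous_on_exponent_integrand assms(1,3,4))
  fix s assume s: "s \<in> {0..x}"
  have "\<beta> * g s \<le> \<beta> * h s" "0 \<le> \<beta> * g s"
    using assms(3) assms(4,5)[OF s] by (auto intro: mult_left_mono)
  then show "2 * s / (1 + \<beta> * h s) \<le> 2 * s / (1 + \<beta> * g s)"
    using s by (intro divide_left_mono) (auto intro!: mult_pos_pos)
qed

text \<open>While z stays below y, y has the smaller integrating exponent, so the Kirchhoff gap
  between the two solutions can only grow.\<close>

lemma kirchhoff_gap_mono:
  assumes y: "solves_integral_form \<beta> \<gamma> L y" and z: "solves_integral_form \<beta> \<gamma> L z"
    and \<beta>: "0 \<le> \<beta>" and \<gamma>: "0 < \<gamma>" and z0: "z 0 \<le> y 0" and rt: "0 \<le> r" "r \<le> t" "t \<le> L"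
    and below: "\<And>s. 0 \<le> s \<Longrightarrow> s < t \<Longrightarrow> z s \<le> y s"
  shows "kirchhoff \<beta> (y r) - kirchhoff \<beta> (z r) \<le> kirchhoff \<beta> (y t) - kirchhoff \<beta> (z t)"
proof (rule DERIV_nonneg_imp_increasing_open[OF rt(2)])
  let ?D = "\<lambda>t. kirchhoff \<beta> (y t) - kirchhoff \<beta> (z t)"
  have dD: "(?D has_real_derivative \<gamma> * y 0 * exp (- integrating_exponent \<beta> y s)
      - \<gamma> * z 0 * exp (- integrating_exponent \<beta> z s)) (at s within {0..L})" if "s \<in> {0..L}" for s
    using has_real_derivative_kirchhoff_integral_form[OF y \<beta> that]
      has_real_derivative_kirchhoff_integral_form[OF z \<beta> that]
    by (rule DERIV_diff)
  show "continuous_on {r..t} ?D"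
    by (rule continuous_on_subset[OF DERIV_continuous_on[OF dD]]) (use rt in auto)
  fix s assume s: "r < s" "s < t"
  have cont: "continuous_on {0..s} y" "continuous_on {0..s} z"
    using solves_integral_form_continuous[OF y] solves_integral_form_continuous[OF z] s rt
    by (auto elim: continuous_on_subset)
  have "integrating_exponent \<beta> y s \<le> integrating_exponent \<beta> z s"
    by (rule integrating_exponent_antimono[OF cont(2,1) \<beta>])
      (use solves_integral_form_bounded[OF z] below s rt in auto)
  moreover have "0 \<le> z 0" using solves_integral_form_bounded[OF z, of 0] rt by auto
  ultimately have "\<gamma> * z 0 * exp (- integrating_exponent \<beta> z s)
      \<le> \<gamma> * y 0 * exp (- integrating_exponent \<beta> y s)"
    using z0 \<gamma> by (intro mult_mono) auto
  then show "\<exists>d. (?D has_real_derivative d) (at s) \<and> 0 \<le> d"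
    using dD[of s] s rt by (auto simp: at_within_Icc_at)
qed

lemma integral_form_strict_comparison:
  assumes y: "solves_integral_form \<beta> \<gamma> L y" and z: "solves_integral_form \<beta> \<gamma> L z"
    and \<beta>: "0 \<le> \<beta>" and \<gamma>: "0 < \<gamma>" and z0: "z 0 < y 0" and x: "x \<in> {0..L}"
  shows "z x < y x"
proof (rule ccontr)
  assume "\<not> z x < y x"
  define S where "S = {0..L} \<inter> (\<lambda>t. y t - z t) -` {..0}"
  have "closed S"
    unfolding S_def using solves_integral_form_continuous[OF y] solves_integral_form_continuous[OF z]
    by (intro continuous_closed_preimage continuous_intros) auto
  moreover have "x \<in> S" "bdd_below S"
    using x \<open>\<not> z x < y x\<close> unfolding S_def by (auto intro: bdd_belowI[of _ 0])
  ultimately have "Inf S \<in> S" by (intro closed_contains_Inf) auto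
  then have t0: "Inf S \<in> {0..L}" "y (Inf S) \<le> z (Inf S)" unfolding S_def by auto
  have below: "z s \<le> y s" if "0 \<le> s" "s < Inf S" for s
    using cInf_lower[OF _ \<open>bdd_below S\<close>, of s] that t0 unfolding S_def by force
  have "kirchhoff \<beta> (y 0) - kirchhoff \<beta> (z 0)
      \<le> kirchhoff \<beta> (y (Inf S)) - kirchhoff \<beta> (z (Inf S))"
    by (rule kirchhoff_gap_mono[OF y z \<beta> \<gamma>]) (use z0 t0 below in auto)
  moreover have "y 0 - z 0 \<le> kirchhoff \<beta> (y 0) - kirchhoff \<beta> (z 0)"
    by (rule kirchhoff_diff_ge) (use \<beta> z0 solves_integral_form_bounded[OF z, of 0] t0 in auto)
  moreover have "z (Inf S) - y (Inf S) \<le> kirchhoff \<beta> (z (Inf S)) - kirchhoff \<beta> (y (Inf S))"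
    by (rule kirchhoff_diff_ge) (use \<beta> t0 solves_integral_form_bounded[OF y t0(1)] in auto)
  ultimately show False using z0 t0 by linarith
qed

lemma abs_exp_neg_diff_le:
  fixes p q :: real
  assumes "0 \<le> p" "0 \<le> q"
  shows "\<bar>exp (- p) - exp (- q)\<bar> \<le> \<bar>p - q\<bar>"
proof -
  have *: "exp (- a) - exp (- b) \<le> b - a" if "0 \<le> a" "a \<le> b" for a b :: real
  proof -
    have "exp (- a) - exp (- b) = exp (- a) * (1 - exp (- (b - a)))"
      by (simp add: algebra_simps flip: exp_add)
    also have "\<dots> \<le> 1 - exp (- (b - a))"
      using that by (intro mult_left_le_one_le) auto
    also have "\<dots> \<le> b - a"
      using exp_ge_add_one_self[of "- (b - a)"] by linarith
    finally show ?thesis .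
  qed
  show ?thesis
    using *[of p q] *[of q p] assms by (cases "p \<le> q") auto
qed

lemma exponent_integrand_diff:
  fixes s u v \<beta> :: real
  assumes "0 \<le> s" "0 \<le> u" "0 \<le> v" "0 \<le> \<beta>"
  shows "\<bar>2 * s / (1 + \<beta> * u) - 2 * s / (1 + \<beta> * v)\<bar> \<le> 2 * s * \<beta> * \<bar>u - v\<bar>"
proof -
  have du: "1 \<le> 1 + \<beta> * u" and dv: "1 \<le> 1 + \<beta> * v" using assms by simp_all
  then have dd: "1 \<le> (1 + \<beta> * u) * (1 + \<beta> * v)" using mult_mono[OF du dv] by simp
  have "2 * s / (1 + \<beta> * u) - 2 * s / (1 + \<beta> * v)
      = 2 * s * \<beta> * (v - u) / ((1 + \<beta> * u) * (1 + \<beta> * v))"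
    using du dv by (simp add: field_simps)
  then have "\<bar>2 * s / (1 + \<beta> * u) - 2 * s / (1 + \<beta> * v)\<bar>
      = \<bar>2 * s * \<beta> * (v - u)\<bar> / ((1 + \<beta> * u) * (1 + \<beta> * v))"
    using dd by simp
  also have "\<dots> \<le> \<bar>2 * s * \<beta> * (v - u)\<bar>"
    using dd by (simp add: divide_le_eq mult_le_cancel_left1)
  also have "\<dots> = 2 * s * \<beta> * \<bar>u - v\<bar>"
    using assms by (simp add: abs_mult abs_minus_commute)
  finally show ?thesis .
qed

lemma exponent_integrand_diff_le_kirchhoff:
  fixes s u v \<beta> :: real
  assumes "0 \<le> s" "s \<le> L" "0 \<le> u" "0 \<le> v" "0 \<le> \<beta>"
  shows "\<bar>2 * s / (1 + \<beta> * u) - 2 * s / (1 + \<beta> * v)\<bar> \<le> 2 * L * \<beta> * \<bar>kirchhoff \<beta> u - kirchhoff \<beta> v\<bar>"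
proof -
  have "\<bar>2 * s / (1 + \<beta> * u) - 2 * s / (1 + \<beta> * v)\<bar> \<le> 2 * s * \<beta> * \<bar>u - v\<bar>"
    by (rule exponent_integrand_diff) (use assms in auto)
  also have "\<dots> \<le> 2 * L * \<beta> * \<bar>kirchhoff \<beta> u - kirchhoff \<beta> v\<bar>"
    using kirchhoff_diff_abs_ge[of \<beta> v u] assms by (intro mult_mono) auto
  finally show ?thesis .
qed

lemma cross_terms_le_sum_squares:
  fixes D R D' R' a b :: real
  assumes "\<bar>D'\<bar> \<le> a * \<bar>R\<bar>" "\<bar>R'\<bar> \<le> b * \<bar>D\<bar>" "0 \<le> a" "0 \<le> b"
  shows "2 * D * D' + 2 * R * R' \<le> (a + b) * (D\<^sup>2 + R\<^sup>2)"
proof -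
  have "D * D' \<le> \<bar>D\<bar> * (a * \<bar>R\<bar>)" "R * R' \<le> \<bar>R\<bar> * (b * \<bar>D\<bar>)"
    using mult_left_mono[OF assms(1) abs_ge_zero[of D]] mult_left_mono[OF assms(2) abs_ge_zero[of R]]
      abs_ge_self[of "D * D'"] abs_ge_self[of "R * R'"]
    by (auto simp: abs_mult)
  moreover have "2 * \<bar>D\<bar> * \<bar>R\<bar> \<le> D\<^sup>2 + R\<^sup>2"
    using zero_le_power2[of "\<bar>D\<bar> - \<bar>R\<bar>"] by (simp add: power2_diff)
  then have "(a + b) * (2 * \<bar>D\<bar> * \<bar>R\<bar>) \<le> (a + b) * (D\<^sup>2 + R\<^sup>2)"
    using assms(3,4) by (intro mult_left_mono) auto
  ultimately show ?thesis by (simp add: algebra_simps)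
qed

lemma gronwall_zero:
  fixes E E' :: "real \<Rightarrow> real"
  assumes dE: "\<And>t. t \<in> {0..L} \<Longrightarrow> (E has_real_derivative E' t) (at t within {0..L})"
    and growth: "\<And>t. 0 < t \<Longrightarrow> t < L \<Longrightarrow> E' t \<le> K * E t"
    and E0: "E 0 = 0" and nonneg: "\<And>t. t \<in> {0..L} \<Longrightarrow> 0 \<le> E t" and x: "x \<in> {0..L}"
  shows "E x = 0"
proof -
  define W where "W t = E t * exp (- K * t)" for t
  have dW: "(W has_real_derivative (E' t - K * E t) * exp (- K * t)) (at t within {0..L})"
    if "t \<in> {0..L}" for t
    unfolding W_def using dE[OF that] by (auto intro!: derivative_eq_intros simp: algebra_simps)
  have "W x - W 0 \<le> 0 * (x - 0)"
  proof (rule DERIV_le_imp_diff_le)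
    show "continuous_on {0..x} W"
      by (rule continuous_on_subset[OF DERIV_continuous_on[OF dW]]) (use x in auto)
    fix t assume t: "0 < t" "t < x"
    then show "(W has_real_derivative (E' t - K * E t) * exp (- K * t)) (at t)"
      using dW[of t] x by (simp add: at_within_Icc_at)
    show "(E' t - K * E t) * exp (- K * t) \<le> 0"
      using growth[of t] t x by (simp add: mult_nonpos_nonneg)
  qed (use x in auto)
  then have "E x \<le> 0" using E0 by (simp add: W_def mult_le_0_iff)
  then show ?thesis using nonneg[OF x] by simp
qed

text \<open>The Kirchhoff gap and the exponent gap bound each other's derivatives, so the sum of
  their squares satisfies a Gronwall inequality.\<close>

lemma integral_form_unique:
  assumes y: "solves_integral_form \<beta> \<gamma> L y" and z: "solves_integral_form \<beta> \<gamma> L z"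
    and \<beta>: "0 \<le> \<beta>" and \<gamma>: "0 < \<gamma>" and eq: "y 0 = z 0" and x: "x \<in> {0..L}"
  shows "y x = z x"
proof -
  define P where "P h = integrating_exponent \<beta> h" for h
  define D where "D t = kirchhoff \<beta> (y t) - kirchhoff \<beta> (z t)" for t
  define R where "R t = P y t - P z t" for t
  define D' where "D' t = \<gamma> * y 0 * (exp (- P y t) - exp (- P z t))" for t
  define R' where "R' t = 2 * t / (1 + \<beta> * y t) - 2 * t / (1 + \<beta> * z t)" for t
  have bnd: "0 \<le> y t" "y t \<le> 1" "0 \<le> z t" if "t \<in> {0..L}" for t
    using solves_integral_form_bounded[OF y that] solves_integral_form_bounded[OF z that] by auto
  have dD: "(D has_real_derivative D' t) (at t within {0..L})" if "t \<in> {0..L}" for t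
    using DERIV_diff[OF has_real_derivative_kirchhoff_integral_form[OF y \<beta> that]
        has_real_derivative_kirchhoff_integral_form[OF z \<beta> that]] eq
    unfolding D_def D'_def P_def by (simp add: algebra_simps)
  have dR: "(R has_real_derivative R' t) (at t within {0..L})" if "t \<in> {0..L}" for t
    unfolding R_def R'_def P_def
    using bnd that solves_integral_form_continuous[OF y] solves_integral_form_continuous[OF z]
    by (intro DERIV_diff has_real_derivative_integrating_exponent \<beta>) auto
  have "(D x)\<^sup>2 + (R x)\<^sup>2 = 0"
  proof (rule gronwall_zero[where E = "\<lambda>t. (D t)\<^sup>2 + (R t)\<^sup>2"
        and E' = "\<lambda>t. 2 * D t * D' t + 2 * R t * R' t" and K = "\<gamma> + 2 * L * \<beta>"])
    fix t assume t: "0 < t" "t < L"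
    then have tL: "t \<in> {0..L}" by simp
    have P_nonneg: "0 \<le> P h t" if "solves_integral_form \<beta> \<gamma> L h" for h
      using integral_form_exponent_bounds[OF that \<beta> tL] unfolding P_def by simp
    have dD_bound: "\<bar>D' t\<bar> \<le> \<gamma> * \<bar>R t\<bar>"
      unfolding D'_def R_def abs_mult
      using abs_exp_neg_diff_le[OF P_nonneg[OF y] P_nonneg[OF z]] bnd[of 0] t \<gamma>
      by (intro mult_mono) (auto simp: mult_left_le)
    have dR_bound: "\<bar>R' t\<bar> \<le> 2 * L * \<beta> * \<bar>D t\<bar>"
      unfolding R'_def D_def
      by (rule exponent_integrand_diff_le_kirchhoff) (use bnd[OF tL] t \<beta> in auto)
    show "2 * D t * D' t + 2 * R t * R' t \<le> (\<gamma> + 2 * L * \<beta>) * ((D t)\<^sup>2 + (R t)\<^sup>2)"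
      by (rule cross_terms_le_sum_squares[OF dD_bound dR_bound]) (use \<gamma> \<beta> t in auto)
  next
    fix t assume "t \<in> {0..L}"
    then show "((\<lambda>t. (D t)\<^sup>2 + (R t)\<^sup>2) has_real_derivative 2 * D t * D' t + 2 * R t * R' t)
        (at t within {0..L})"
      using dD dR by (auto intro!: derivative_eq_intros)
  qed (use x eq in \<open>auto simp: D_def R_def P_def\<close>)
  then have "D x = 0" by (simp add: sum_power2_eq_zero_iff)
  then show ?thesis
    using kirchhoff_diff_abs_ge[OF \<beta> bnd(3)[OF x] bnd(1)[OF x]] unfolding D_def by simp
qed

lemma integral_form_comparison:
  assumes y: "solves_integral_form \<beta> \<gamma> L y" and z: "solves_integral_form \<beta> \<gamma> L z"
    and \<beta>: "0 \<le> \<beta>" and \<gamma>: "0 < \<gamma>" and z0: "z 0 \<le> y 0" and x: "x \<in> {0..L}"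
  shows "z x \<le> y x"
proof (cases "z 0 = y 0")
  case True
  then show ?thesis using integral_form_unique[OF z y \<beta> \<gamma> _ x] by simp
next
  case False
  then show ?thesis using integral_form_strict_comparison[OF y z \<beta> \<gamma> _ x] z0 by simp
qed

lemma integral_form_initial_antimono:
  assumes y: "solves_integral_form \<beta> \<gamma> lam y" and z: "solves_integral_form \<beta> \<gamma> mu z"
    and \<beta>: "0 \<le> \<beta>" and \<gamma>: "0 < \<gamma>" and lam: "0 \<le> lam" "lam \<le> mu"
    and y1: "y lam = 1" and z1: "z mu = 1"
  shows "z 0 \<le> y 0"
proof (rule ccontr)
  assume "\<not> z 0 \<le> y 0"
  then have "y lam < z lam"
    using integral_form_strict_comparison[OF solves_integral_form_restrict[OF z lam(2)] y \<beta> \<gamma>] lam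
    by simp
  then show False
    using y1 solves_integral_form_bounded[OF z, of lam] lam by simp
qed

lemma integral_form_gap_bound:
  assumes y: "solves_integral_form \<beta> \<gamma> lam y" and z: "solves_integral_form \<beta> \<gamma> mu z"
    and \<beta>: "0 \<le> \<beta>" and \<gamma>: "0 < \<gamma>" and lam: "0 \<le> lam" "lam \<le> mu"
    and y1: "y lam = 1" and z1: "z mu = 1" and \<eta>: "\<eta> \<in> {0..lam}"
  shows "0 \<le> y \<eta> - z \<eta> \<and> y \<eta> - z \<eta> \<le> (1 + \<beta>) * \<gamma> * (mu - lam)"
proof -
  have z': "solves_integral_form \<beta> \<gamma> lam z" by (rule solves_integral_form_restrict[OF z lam(2)])
  have z0: "z 0 \<le> y 0" by (rule integral_form_initial_antimono[OF y z \<beta> \<gamma> lam y1 z1])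
  have below: "z s \<le> y s" if "s \<in> {0..lam}" for s
    by (rule integral_form_comparison[OF y z' \<beta> \<gamma> z0 that])
  have zlam: "0 \<le> z lam" "z lam \<le> 1" "0 \<le> z 0" "z 0 \<le> 1"
    using solves_integral_form_bounded[OF z, of lam] solves_integral_form_bounded[OF z, of 0] lam
    by auto
  have "1 - z lam \<le> \<gamma> * z 0 * (mu - lam)"
    using integral_form_increasing[OF z \<beta> \<gamma> lam] z1 by simp
  also have "\<dots> \<le> \<gamma> * (mu - lam)"
    using zlam \<gamma> lam mult_left_le_one_le[of "\<gamma> * (mu - lam)" "z 0"] by (simp add: algebra_simps)
  finally have zlam_gap: "1 - z lam \<le> \<gamma> * (mu - lam)" .
  have "y \<eta> - z \<eta> \<le> kirchhoff \<beta> (y \<eta>) - kirchhoff \<beta> (z \<eta>)"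
    using kirchhoff_diff_ge[OF \<beta> _ below[OF \<eta>]] solves_integral_form_bounded[OF z' \<eta>] by simp
  also have "\<dots> \<le> kirchhoff \<beta> (y lam) - kirchhoff \<beta> (z lam)"
    by (rule kirchhoff_gap_mono[OF y z' \<beta> \<gamma> z0]) (use \<eta> below in auto)
  also have "\<dots> \<le> (1 + \<beta>) * (1 - z lam)"
    unfolding y1 by (rule kirchhoff_diff_le) (use \<beta> zlam in auto)
  also have "\<dots> \<le> (1 + \<beta>) * \<gamma> * (mu - lam)"
    using mult_left_mono[OF zlam_gap, of "1 + \<beta>"] \<beta> by (simp add: mult.assoc)
  finally show ?thesis using below[OF \<eta>] by simp
qed

section \<open>Dependence on the free boundary\<close>

lemma integrating_exponent_diff_bound:
  fixes g h :: "real \<Rightarrow> real"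
  assumes ch: "continuous_on {0..x} h" and cg: "continuous_on {0..t} g" and \<beta>: "0 \<le> \<beta>"
    and xt: "0 \<le> x" "x \<le> t"
    and h: "\<And>s. s \<in> {0..x} \<Longrightarrow> 0 \<le> h s" and g: "\<And>s. s \<in> {0..t} \<Longrightarrow> 0 \<le> g s"
    and M: "\<And>s. s \<in> {0..x} \<Longrightarrow> \<bar>h s - g s\<bar> \<le> M"
  shows "\<bar>integrating_exponent \<beta> h x - integrating_exponent \<beta> g t\<bar> \<le> 2 * x * \<beta> * M * x + 2 * t * (t - x)"
proof -
  define qh where "qh s = 2 * s / (1 + \<beta> * h s)" for s
  define qg where "qg s = 2 * s / (1 + \<beta> * g s)" for s
  have cqh: "continuous_on {0..x} qh"
    unfolding qh_def by (rule continuous_on_exponent_integrand[OF ch \<beta> h])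
  have cqg: "continuous_on {0..t} qg"
    unfolding qg_def by (rule continuous_on_exponent_integrand[OF cg \<beta> g])
  have "integrating_exponent \<beta> g t = integral {0..x} qg + integral {x..t} qg"
    unfolding integrating_exponent_def qg_def[symmetric]
    using Henstock_Kurzweil_Integration.integral_combine[where a = 0 and c = x and b = t and f = qg]
      xt integrable_continuous_interval[OF cqg]
    by simp
  moreover have "integrating_exponent \<beta> h x - integral {0..x} qg = integral {0..x} (\<lambda>s. qh s - qg s)"
    unfolding integrating_exponent_def qh_def[symmetric] using xt
    by (intro integral_diff[symmetric] integrable_continuous_interval cqh continuous_on_subset[OF cqg])
      auto
  moreover have "norm (integral {0..x} (\<lambda>s. qh s - qg s)) \<le> 2 * x * \<beta> * M * (x - 0)"
  proof (rule integral_bound)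
    show "continuous_on {0..x} (\<lambda>s. qh s - qg s)"
      using cqh continuous_on_subset[OF cqg] xt by (intro continuous_intros) auto
    fix s assume s: "s \<in> {0..x}"
    have "\<bar>qh s - qg s\<bar> \<le> 2 * s * \<beta> * \<bar>h s - g s\<bar>"
      unfolding qh_def qg_def by (rule exponent_integrand_diff) (use s xt \<beta> h g in auto)
    also have "\<dots> \<le> 2 * x * \<beta> * M"
      using s \<beta> M[OF s] by (intro mult_mono) (auto intro: mult_right_mono)
    finally show "norm (qh s - qg s) \<le> 2 * x * \<beta> * M" by simp
  qed (use xt in auto)
  moreover have "norm (integral {x..t} qg) \<le> 2 * t * (t - x)"
  proof (rule integral_bound)
    show "continuous_on {x..t} qg" using continuous_on_subset[OF cqg] xt by auto
    fix s assume s: "s \<in> {x..t}"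
    then have "0 \<le> qg s \<and> qg s \<le> 2 * s"
      unfolding qg_def by (intro exponent_integrand_bounds \<beta>) (use xt g in auto)
    then show "norm (qg s) \<le> 2 * t" using s by auto
  qed (use xt in auto)
  ultimately show ?thesis by (simp add: abs_le_iff)
qed

locale integral_form_family =
  fixes \<beta> \<gamma> :: real and \<phi> :: "real \<Rightarrow> real \<Rightarrow> real"
  assumes beta_nonneg: "0 \<le> \<beta>" and gamma_pos: "0 < \<gamma>"
    and solves: "\<And>lam. 0 < lam \<Longrightarrow> solves_integral_form \<beta> \<gamma> lam (\<phi> lam)"
    and boundary_one: "\<And>lam. 0 < lam \<Longrightarrow> \<phi> lam lam = 1"
begin

definition boundary_flux :: "real \<Rightarrow> real" where
  "boundary_flux lam = \<phi> lam 0 * exp (- integrating_exponent \<beta> (\<phi> lam) lam)"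

lemma has_real_derivative_at_boundary:
  assumes "0 < lam"
  shows "(\<phi> lam has_real_derivative \<gamma> * boundary_flux lam / (1 + \<beta>)) (at lam within {0..lam})"
  using solves_integral_form_deriv[OF solves[OF assms], of lam] assms boundary_one[OF assms]
  by (simp add: boundary_flux_def mult.assoc)

lemma initial_value_lipschitz:
  assumes "0 < x" "x \<le> y"
  shows "\<bar>\<phi> x 0 - \<phi> y 0\<bar> \<le> (1 + \<beta>) * \<gamma> * (y - x)"
  using integral_form_gap_bound[OF solves solves beta_nonneg gamma_pos _ _ boundary_one boundary_one,
      of x y 0] assms
  by simp

lemma exponent_lipschitz:
  assumes "0 < x" "x \<le> y" "y \<le> b"
  shows "\<bar>integrating_exponent \<beta> (\<phi> x) x - integrating_exponent \<beta> (\<phi> y) y\<bar>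
    \<le> (2 * \<beta> * (1 + \<beta>) * \<gamma> * b\<^sup>2 + 2 * b) * (y - x)"
proof -
  define C where "C = (1 + \<beta>) * \<gamma>"
  have C: "0 \<le> C" using beta_nonneg gamma_pos by (simp add: C_def)
  have "\<bar>integrating_exponent \<beta> (\<phi> x) x - integrating_exponent \<beta> (\<phi> y) y\<bar>
      \<le> 2 * x * \<beta> * (C * (y - x)) * x + 2 * y * (y - x)"
  proof (rule integrating_exponent_diff_bound)
    fix s assume "s \<in> {0..x}"
    then show "\<bar>\<phi> x s - \<phi> y s\<bar> \<le> C * (y - x)"
      using integral_form_gap_bound[OF solves solves beta_nonneg gamma_pos _ _ boundary_one boundary_one,
          of x y s] assms
      by (simp add: C_def)
  qed (use assms solves_integral_form_continuous[OF solves] solves_integral_form_bounded[OF solves]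
      beta_nonneg in auto)
  also have "\<dots> = (2 * \<beta> * C * x\<^sup>2 + 2 * y) * (y - x)"
    by (simp add: algebra_simps power2_eq_square)
  also have "\<dots> \<le> (2 * \<beta> * C * b\<^sup>2 + 2 * b) * (y - x)"
    using assms beta_nonneg C
    by (intro mult_right_mono add_mono mult_left_mono power_mono) (auto intro: mult_nonneg_nonneg)
  finally show ?thesis by (simp add: C_def mult.assoc)
qed

lemma continuous_on_boundary_flux:
  assumes "0 < a" "a \<le> b"
  shows "continuous_on {a..b} boundary_flux"
proof -
  have "continuous_on {a..b} (\<lambda>lam. \<phi> lam 0)"
    by (rule continuous_on_if_ordered_lipschitz[where K = "(1 + \<beta>) * \<gamma>"])
      (use assms initial_value_lipschitz beta_nonneg gamma_pos in auto)
  moreover have "continuous_on {a..b} (\<lambda>lam. integrating_exponent \<beta> (\<phi> lam) lam)"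
  proof (rule continuous_on_if_ordered_lipschitz[where K = "2 * \<beta> * (1 + \<beta>) * \<gamma> * b\<^sup>2 + 2 * b"])
    show "0 \<le> 2 * \<beta> * (1 + \<beta>) * \<gamma> * b\<^sup>2 + 2 * b"
      using assms beta_nonneg gamma_pos by (intro add_nonneg_nonneg mult_nonneg_nonneg) auto
  qed (use assms exponent_lipschitz in auto)
  ultimately show ?thesis
    unfolding boundary_flux_def by (intro continuous_intros)
qed

lemma boundary_flux_le_one:
  assumes "0 < lam"
  shows "boundary_flux lam \<le> 1"
proof -
  have "0 \<le> integrating_exponent \<beta> (\<phi> lam) lam" "\<phi> lam 0 \<le> 1"
    using integral_form_exponent_bounds[OF solves[OF assms] beta_nonneg, of lam]
      solves_integral_form_bounded[OF solves[OF assms], of 0] assms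
    by auto
  then show ?thesis
    unfolding boundary_flux_def
    using mult_mono[of "\<phi> lam 0" 1 "exp (- integrating_exponent \<beta> (\<phi> lam) lam)" 1] by simp
qed

text \<open>The solution climbs from its initial value to 1 with slope at most \<gamma> times that value,
  which bounds the initial value below; the exponent is O(lam^2).\<close>

lemma boundary_flux_lower_bound:
  assumes "0 < lam" "lam \<le> 1"
  shows "exp (- 2) / (1 + \<gamma>) \<le> boundary_flux lam"
proof -
  have sol: "solves_integral_form \<beta> \<gamma> lam (\<phi> lam)" by (rule solves) (use assms in simp)
  have a: "0 \<le> \<phi> lam 0" using solves_integral_form_bounded[OF sol, of 0] assms by simp
  have "1 - \<phi> lam 0 \<le> \<gamma> * \<phi> lam 0 * lam"
    using integral_form_increasing[OF sol beta_nonneg gamma_pos, of 0 lam] assms boundary_one by simp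
  also have "\<dots> \<le> \<gamma> * \<phi> lam 0"
    using a gamma_pos assms by (simp add: mult_left_le)
  finally have "1 / (1 + \<gamma>) \<le> \<phi> lam 0"
    using gamma_pos by (simp add: divide_le_eq algebra_simps)
  moreover have "integrating_exponent \<beta> (\<phi> lam) lam \<le> 2"
    using integral_form_exponent_bounds[OF sol beta_nonneg, of lam] assms mult_mono[of lam 1 lam 1]
    by auto
  ultimately have "1 / (1 + \<gamma>) * exp (- 2) \<le> boundary_flux lam"
    unfolding boundary_flux_def using gamma_pos a by (intro mult_mono) auto
  then show ?thesis by simp
qed

lemma exists_boundary_flux_ratio:
  assumes c: "0 < c"
  shows "\<exists>lam>0. boundary_flux lam / lam = c"
proof -
  define m where "m = exp (- 2) / (1 + \<gamma>)"
  define l1 where "l1 = min 1 (m / c)"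
  define l2 where "l2 = max l1 (1 / c)"
  have m: "0 < m" using gamma_pos by (simp add: m_def)
  have l1: "0 < l1" "l1 \<le> 1" "c * l1 \<le> m" using m c by (auto simp: l1_def min_mult_distrib_left)
  have l2: "l1 \<le> l2" "1 \<le> c * l2" using c by (auto simp: l2_def max_mult_distrib_left)
  have "c * l1 \<le> boundary_flux l1"
    using boundary_flux_lower_bound[OF l1(1,2)] l1(3) unfolding m_def by linarith
  then have "c \<le> boundary_flux l1 / l1" using l1(1) by (simp add: le_divide_eq)
  moreover have "boundary_flux l2 / l2 \<le> c"
    using boundary_flux_le_one[of l2] l1 l2 by (simp add: divide_le_eq mult.commute)
  ultimately obtain lam where "l1 \<le> lam" "boundary_flux lam / lam = c"
    using IVT2'[of "\<lambda>lam. boundary_flux lam / lam" l2 c l1] l2(1) l1(1)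
      continuous_on_boundary_flux[OF l1(1) l2(1)]
    by (force intro: continuous_intros)
  then show ?thesis using l1(1) by (intro exI[of _ lam]) auto
qed

end

theorem theorem3p12:
  fixes \<gamma> \<beta> Ste :: real and \<phi> :: "real \<Rightarrow> real \<Rightarrow> real"
  assumes "\<gamma> > 0"
    and "0 \<le> \<beta>" and "\<beta> < beta1 \<gamma>"
    and "Ste > 0"
    and "\<And>lam. lam > 0 \<Longrightarrow> solves_problem \<beta> \<gamma> lam (\<phi> lam)"
    and "\<And>lam h. lam > 0 \<Longrightarrow> solves_problem \<beta> \<gamma> lam h \<Longrightarrow> \<forall>\<eta>\<in>{0..lam}. h \<eta> = \<phi> lam \<eta>"
  shows "\<exists>lam>0. \<exists>d. (\<phi> lam has_real_derivative d) (at lam within {0..lam}) \<and>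
                d / lam = 2 / ((1 + \<beta>) * Ste)"
proof -
  interpret integral_form_family \<beta> \<gamma> \<phi>
  proof
    fix lam :: real assume "0 < lam"
    then show "solves_integral_form \<beta> \<gamma> lam (\<phi> lam)" "\<phi> lam lam = 1"
      using solution_imp_integral_form assms(2,5) solves_problem_def by auto
  qed (use assms in auto)
  obtain lam where lam: "0 < lam" "boundary_flux lam / lam = 2 / (\<gamma> * Ste)"
    using exists_boundary_flux_ratio[of "2 / (\<gamma> * Ste)"] assms(1,4) by auto
  have "\<gamma> * boundary_flux lam / (1 + \<beta>) / lam = \<gamma> / (1 + \<beta>) * (boundary_flux lam / lam)"
    by simp
  also have "\<dots> = 2 / ((1 + \<beta>) * Ste)"
    using lam(2) assms(1) by simp
  finally show ?thesis
    using has_real_derivative_at_boundary[OF lam(1)] lam(1) by blast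
qed

end
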